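(* Let $\Sigma$ be a finite relational signature and let $\mathcal{C}$ and $\mathcal{K}$ be non-empty classes of finite $\Sigma$-structures. (a) $\mathcal{C}\cup\mathcal{K}$ is MSO-orderable if, and only if, both $\mathcal{C}$ and $\mathcal{K}$ are MSO-orderable. (b) The class $\mathcal{C}\oplus\mathcal{K}:=\{\mathfrak{A}\oplus\mathfrak{B} : \mathfrak{A}\in\mathcal{C},\ \mathfrak{B}\in\mathcal{K}\}$ is MSO-orderable if, and only if, both $\mathcal{C}$ and $\mathcal{K}$ are MSO-orderable.
   Context: Structures are finite, purely relational (universe may be empty). $\mathfrak{A}\oplus\mathfrak{B}$ denotes the disjoint union of $\mathfrak{A}$ and $\mathfrak{B}$. An MSO-formula $\varphi(x,y;Z_0,\dots,Z_{n-1})$ (two free first-order variables, $n$ free set variables called parameters) defines an order on a class $\mathcal{C}$ of structures if for every non-empty $\mathfrak{A}\in\mathcal{C}$ there are sets $P_0,\dots,P_{n-1}\subseteq A$ such that $\{(a,b) : \mathfrak{A}\models\varphi(a,b;\bar P)\}$ is a linear order on $A$. A class is MSO-orderable if some MSO-formula defines an order on it. *)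

theory Defs
  imports Main
begin

record ('a, 'r) struc =
  univ :: "'a set"
  rels :: "'r \<Rightarrow> 'a list set"

text \<open>Well-formed finite structure for the signature with arity function ar.
The universe may be empty.\<close>
definition is_struct :: "('r \<Rightarrow> nat) \<Rightarrow> ('a, 'r) struc \<Rightarrow> bool" where
  "is_struct ar S \<longleftrightarrow> finite (univ S) \<and>
     (\<forall>R. \<forall>t \<in> rels S R. length t = ar R \<and> set t \<subseteq> univ S)"

definition dunion :: "('a, 'r) struc \<Rightarrow> ('b, 'r) struc \<Rightarrow> ('a + 'b, 'r) struc" where
  "dunion A B = \<lparr> univ = Inl ` univ A \<union> Inr ` univ B,
                 rels = (\<lambda>R. map Inl ` rels A R \<union> map Inr ` rels B R) \<rparr>"

definition dunion_class ::
  "('a, 'r) struc set \<Rightarrow> ('b, 'r) struc set \<Rightarrow> ('a + 'b, 'r) struc set" where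
  "dunion_class C K = {dunion A B | A B. A \<in> C \<and> B \<in> K}"

datatype 'r mso =
    Rel 'r "nat list"
  | Eq nat nat
  | Mem nat nat
  | Neg "'r mso"
  | Conj "'r mso" "'r mso"
  | Disj "'r mso" "'r mso"
  | Ex1 nat "'r mso"
  | All1 nat "'r mso"
  | ExS nat "'r mso"
  | AllS nat "'r mso"

fun sat :: "('a, 'r) struc \<Rightarrow> 'r mso \<Rightarrow> (nat \<Rightarrow> 'a) \<Rightarrow> (nat \<Rightarrow> 'a set) \<Rightarrow> bool" where
  "sat S (Rel R xs) v V \<longleftrightarrow> map v xs \<in> rels S R"
| "sat S (Eq x y) v V \<longleftrightarrow> v x = v y"
| "sat S (Mem x X) v V \<longleftrightarrow> v x \<in> V X"
| "sat S (Neg \<phi>) v V \<longleftrightarrow> \<not> sat S \<phi> v V"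
| "sat S (Conj \<phi> \<psi>) v V \<longleftrightarrow> sat S \<phi> v V \<and> sat S \<psi> v V"
| "sat S (Disj \<phi> \<psi>) v V \<longleftrightarrow> sat S \<phi> v V \<or> sat S \<psi> v V"
| "sat S (Ex1 x \<phi>) v V \<longleftrightarrow> (\<exists>a \<in> univ S. sat S \<phi> (v(x := a)) V)"
| "sat S (All1 x \<phi>) v V \<longleftrightarrow> (\<forall>a \<in> univ S. sat S \<phi> (v(x := a)) V)"
| "sat S (ExS X \<phi>) v V \<longleftrightarrow> (\<exists>P \<subseteq> univ S. sat S \<phi> v (V(X := P)))"
| "sat S (AllS X \<phi>) v V \<longleftrightarrow> (\<forall>P \<subseteq> univ S. sat S \<phi> v (V(X := P)))"

fun fv1 :: "'r mso \<Rightarrow> nat set" where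
  "fv1 (Rel R xs) = set xs"
| "fv1 (Eq x y) = {x, y}"
| "fv1 (Mem x X) = {x}"
| "fv1 (Neg \<phi>) = fv1 \<phi>"
| "fv1 (Conj \<phi> \<psi>) = fv1 \<phi> \<union> fv1 \<psi>"
| "fv1 (Disj \<phi> \<psi>) = fv1 \<phi> \<union> fv1 \<psi>"
| "fv1 (Ex1 x \<phi>) = fv1 \<phi> - {x}"
| "fv1 (All1 x \<phi>) = fv1 \<phi> - {x}"
| "fv1 (ExS X \<phi>) = fv1 \<phi>"
| "fv1 (AllS X \<phi>) = fv1 \<phi>"

fun fvS :: "'r mso \<Rightarrow> nat set" where
  "fvS (Rel R xs) = {}"
| "fvS (Eq x y) = {}"
| "fvS (Mem x X) = {X}"
| "fvS (Neg \<phi>) = fvS \<phi>"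
| "fvS (Conj \<phi> \<psi>) = fvS \<phi> \<union> fvS \<psi>"
| "fvS (Disj \<phi> \<psi>) = fvS \<phi> \<union> fvS \<psi>"
| "fvS (Ex1 x \<phi>) = fvS \<phi>"
| "fvS (All1 x \<phi>) = fvS \<phi>"
| "fvS (ExS X \<phi>) = fvS \<phi> - {X}"
| "fvS (AllS X \<phi>) = fvS \<phi> - {X}"

text \<open>The formula phi(x,y; Z_0,...,Z_{n-1}) has first-order free variables among
x = 0, y = 1 and set parameters among 0..<n.\<close>
definition defines_order :: "'r mso \<Rightarrow> nat \<Rightarrow> ('a, 'r) struc set \<Rightarrow> bool" where
  "defines_order \<phi> n C \<longleftrightarrow>
     fv1 \<phi> \<subseteq> {0, 1} \<and> fvS \<phi> \<subseteq> {..<n} \<and>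
     (\<forall>S \<in> C. univ S \<noteq> {} \<longrightarrow>
        (\<exists>P :: nat \<Rightarrow> 'a set. (\<forall>i < n. P i \<subseteq> univ S) \<and>
           linear_order_on (univ S)
             {(a, b). a \<in> univ S \<and> b \<in> univ S \<and>
                      sat S \<phi> (\<lambda>i. if i = 0 then a else b) P}))"

definition MSO_orderable :: "('a, 'r) struc set \<Rightarrow> bool" where
  "MSO_orderable C \<longleftrightarrow> (\<exists>\<phi> n. defines_order \<phi> n C)"

end

theory Submission
  imports Defs "HOL-Library.FuncSet"
begin

text \<open>For a union, a fresh parameter that is non-empty exactly on the structures of the first
  class selects which of the two defining formulas to use.  An order on \<open>A \<oplus> B\<close> is obtained
  by relativising the defining formulas of \<open>A\<close> and \<open>B\<close> to the two summands, which are
  supplied as parameters, and placing \<open>A\<close> before \<open>B\<close>.  Conversely, fix a structure \<open>B\<close>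
  of the second class.  As \<open>B\<close> is finite, every formula over \<open>A \<oplus> B\<close> translates into a
  formula over \<open>A\<close> by expanding quantifiers over \<open>B\<close> into finite disjunctions and
  conjunctions; so the restriction to \<open>A\<close> of a definable order on \<open>A \<oplus> B\<close> is definable
  on \<open>A\<close>, once the finitely many possible traces of the parameters on \<open>B\<close> are guessed.\<close>

lemma sat_cong_fv:
  "(\<And>x. x \<in> fv1 \<phi> \<Longrightarrow> v x = v' x) \<Longrightarrow> (\<And>X. X \<in> fvS \<phi> \<Longrightarrow> V X = V' X)
   \<Longrightarrow> sat S \<phi> v V \<longleftrightarrow> sat S \<phi> v' V'"
proof (induction \<phi> arbitrary: v v' V V')
  case (Rel R xs)
  then have "map v xs = map v' xs" by (simp add: map_eq_conv)
  then show ?case by (simp del: map_eq_conv)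
next
  case (Ex1 x \<phi>)
  have "sat S \<phi> (v(x := a)) V \<longleftrightarrow> sat S \<phi> (v'(x := a)) V'" for a
    using Ex1.prems by (intro Ex1.IH) auto
  then show ?case by simp
next
  case (All1 x \<phi>)
  have "sat S \<phi> (v(x := a)) V \<longleftrightarrow> sat S \<phi> (v'(x := a)) V'" for a
    using All1.prems by (intro All1.IH) auto
  then show ?case by simp
next
  case (ExS X \<phi>)
  have "sat S \<phi> v (V(X := P)) \<longleftrightarrow> sat S \<phi> v' (V'(X := P))" for P
    using ExS.prems by (intro ExS.IH) auto
  then show ?case by simp
next
  case (AllS X \<phi>)
  have "sat S \<phi> v (V(X := P)) \<longleftrightarrow> sat S \<phi> v' (V'(X := P))" for P
    using AllS.prems by (intro AllS.IH) auto
  then show ?case by simp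
next
  case (Neg \<phi>)
  have "sat S \<phi> v V \<longleftrightarrow> sat S \<phi> v' V'" using Neg.prems by (intro Neg.IH) auto
  then show ?case by simp
next
  case (Conj \<phi> \<psi>)
  have "sat S \<phi> v V \<longleftrightarrow> sat S \<phi> v' V'" "sat S \<psi> v V \<longleftrightarrow> sat S \<psi> v' V'"
    using Conj.prems by (intro Conj.IH; auto)+
  then show ?case by simp
next
  case (Disj \<phi> \<psi>)
  have "sat S \<phi> v V \<longleftrightarrow> sat S \<phi> v' V'" "sat S \<psi> v V \<longleftrightarrow> sat S \<psi> v' V'"
    using Disj.prems by (intro Disj.IH; auto)+
  then show ?case by simp
qed simp_all

lemma sat_upd_notin_fvS: "X \<notin> fvS \<phi> \<Longrightarrow> sat S \<phi> v (V(X := P)) \<longleftrightarrow> sat S \<phi> v V"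
  by (rule sat_cong_fv) auto

definition mso_const :: "bool \<Rightarrow> 'r mso" where
  "mso_const b = (if b then All1 0 (Eq 0 0) else Neg (All1 0 (Eq 0 0)))"

definition nonempty :: "nat \<Rightarrow> 'r mso" where
  "nonempty X = Ex1 0 (Mem 0 X)"

definition disjs :: "'r mso list \<Rightarrow> 'r mso" where
  "disjs \<phi>s = foldr Disj \<phi>s (mso_const False)"

definition conjs :: "'r mso list \<Rightarrow> 'r mso" where
  "conjs \<phi>s = foldr Conj \<phi>s (mso_const True)"

lemma sat_mso_const [simp]: "sat S (mso_const b) v V \<longleftrightarrow> b"
  and fv_mso_const [simp]: "fv1 (mso_const b) = {}" "fvS (mso_const b) = {}"
  by (simp_all add: mso_const_def)

lemma sat_nonempty [simp]: "sat S (nonempty X) v V \<longleftrightarrow> univ S \<inter> V X \<noteq> {}"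
  and fv_nonempty [simp]: "fv1 (nonempty X) = {}" "fvS (nonempty X) = {X}"
  by (auto simp: nonempty_def)

lemma sat_disjs [simp]: "sat S (disjs \<phi>s) v V \<longleftrightarrow> (\<exists>\<phi>\<in>set \<phi>s. sat S \<phi> v V)"
  and sat_conjs [simp]: "sat S (conjs \<phi>s) v V \<longleftrightarrow> (\<forall>\<phi>\<in>set \<phi>s. sat S \<phi> v V)"
  by (induction \<phi>s) (simp_all add: disjs_def conjs_def)

lemma fv_disjs [simp]: "fv1 (disjs \<phi>s) = (\<Union>\<phi>\<in>set \<phi>s. fv1 \<phi>)" "fvS (disjs \<phi>s) = (\<Union>\<phi>\<in>set \<phi>s. fvS \<phi>)"
  and fv_conjs [simp]: "fv1 (conjs \<phi>s) = (\<Union>\<phi>\<in>set \<phi>s. fv1 \<phi>)" "fvS (conjs \<phi>s) = (\<Union>\<phi>\<in>set \<phi>s. fvS \<phi>)"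
  by (induction \<phi>s) (simp_all add: disjs_def conjs_def)

definition defined_rel :: "('a, 'r) struc \<Rightarrow> 'r mso \<Rightarrow> (nat \<Rightarrow> 'a set) \<Rightarrow> 'a rel" where
  "defined_rel S \<phi> P = {(a, b). a \<in> univ S \<and> b \<in> univ S \<and> sat S \<phi> (\<lambda>i. if i = 0 then a else b) P}"

lemma mem_defined_rel:
  "(a, b) \<in> defined_rel S \<phi> P \<longleftrightarrow> a \<in> univ S \<and> b \<in> univ S \<and> sat S \<phi> (\<lambda>i. if i = 0 then a else b) P"
  by (simp add: defined_rel_def)

lemma defines_order_iff:
  "defines_order \<phi> n C \<longleftrightarrow> fv1 \<phi> \<subseteq> {0, 1} \<and> fvS \<phi> \<subseteq> {..<n} \<and>
     (\<forall>S \<in> C. univ S \<noteq> {} \<longrightarrow>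
        (\<exists>P. (\<forall>i < n. P i \<subseteq> univ S) \<and> linear_order_on (univ S) (defined_rel S \<phi> P)))"
  by (simp add: defines_order_def defined_rel_def)

lemma defines_orderI:
  assumes "fv1 \<phi> \<subseteq> {0, 1}" and "fvS \<phi> \<subseteq> {..<n}"
    and "\<And>S. S \<in> C \<Longrightarrow> univ S \<noteq> {} \<Longrightarrow>
           \<exists>P. (\<forall>i. P i \<subseteq> univ S) \<and> linear_order_on (univ S) (defined_rel S \<phi> P)"
  shows "defines_order \<phi> n C"
  using assms unfolding defines_order_iff by meson

lemma defines_order_fv:
  assumes "defines_order \<phi> n C"
  shows "fv1 \<phi> \<subseteq> {0, 1}" and "fvS \<phi> \<subseteq> {..<n}"
  using assms by (simp_all add: defines_order_iff)

lemma defines_order_params: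
  assumes "defines_order \<phi> n C" and "S \<in> C"
  shows "\<exists>P. (\<forall>i. P i \<subseteq> univ S) \<and> linear_order_on (univ S) (defined_rel S \<phi> P)"
proof (cases "univ S = {}")
  case True
  then show ?thesis by (intro exI[of _ "\<lambda>_. {}"]) (simp add: defined_rel_def)
next
  case False
  with assms obtain P where P: "\<forall>i<n. P i \<subseteq> univ S"
    and lin: "linear_order_on (univ S) (defined_rel S \<phi> P)"
    unfolding defines_order_iff by blast
  define P' where "P' i = (if i < n then P i else {})" for i
  have "sat S \<phi> v P' \<longleftrightarrow> sat S \<phi> v P" for v
    using defines_order_fv(2)[OF assms(1)] by (intro sat_cong_fv) (auto simp: P'_def)
  then have "defined_rel S \<phi> P' = defined_rel S \<phi> P"
    by (simp add: defined_rel_def)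
  then show ?thesis using P lin by (intro exI[of _ P']) (simp add: P'_def)
qed

lemma defines_order_subset: "defines_order \<phi> n C \<Longrightarrow> C' \<subseteq> C \<Longrightarrow> defines_order \<phi> n C'"
  unfolding defines_order_def by blast

section \<open>Unions of classes\<close>

lemma MSO_orderable_Un_iff:
  "MSO_orderable (C \<union> K) \<longleftrightarrow> MSO_orderable C \<and> MSO_orderable K"
proof
  assume "MSO_orderable (C \<union> K)"
  then obtain \<phi> n where d: "defines_order \<phi> n (C \<union> K)" unfolding MSO_orderable_def by blast
  have "defines_order \<phi> n C" "defines_order \<phi> n K"
    by (rule defines_order_subset[OF d], blast)+
  then show "MSO_orderable C \<and> MSO_orderable K" unfolding MSO_orderable_def by blast
next
  assume "MSO_orderable C \<and> MSO_orderable K"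
  then obtain \<phi>1 n1 \<phi>2 n2 where d1: "defines_order \<phi>1 n1 C" and d2: "defines_order \<phi>2 n2 K"
    unfolding MSO_orderable_def by blast
  define m where "m = max n1 n2"
  define \<psi> where "\<psi> = Disj (Conj (nonempty m) \<phi>1) (Conj (Neg (nonempty m)) \<phi>2)"
  note fv1 = defines_order_fv[OF d1] and fv2 = defines_order_fv[OF d2]
  have "fvS \<phi>1 \<subseteq> {..<m}" "fvS \<phi>2 \<subseteq> {..<m}" using fv1(2) fv2(2) by (auto simp: m_def)
  then have "m \<notin> fvS \<phi>1" "m \<notin> fvS \<phi>2" by auto
  have "defines_order \<psi> (Suc m) (C \<union> K)"
  proof (rule defines_orderI)
    show "fv1 \<psi> \<subseteq> {0, 1}"
      using fv1(1) fv2(1) by (simp add: \<psi>_def)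
    show "fvS \<psi> \<subseteq> {..<Suc m}"
      using \<open>fvS \<phi>1 \<subseteq> {..<m}\<close> \<open>fvS \<phi>2 \<subseteq> {..<m}\<close> by (auto simp: \<psi>_def)
    fix S assume S: "S \<in> C \<union> K" "univ S \<noteq> {}"
    show "\<exists>P. (\<forall>i. P i \<subseteq> univ S) \<and> linear_order_on (univ S) (defined_rel S \<psi> P)"
    proof (cases "S \<in> C")
      case True
      obtain P where "\<forall>i. P i \<subseteq> univ S" "linear_order_on (univ S) (defined_rel S \<phi>1 P)"
        using defines_order_params[OF d1 True] by blast
      moreover have "defined_rel S \<psi> (P(m := univ S)) = defined_rel S \<phi>1 P"
        using S(2) \<open>m \<notin> fvS \<phi>1\<close> by (auto simp: defined_rel_def \<psi>_def sat_upd_notin_fvS)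
      ultimately show ?thesis by (intro exI[of _ "P(m := univ S)"]) auto
    next
      case False
      with S(1) have "S \<in> K" by simp
      obtain P where "\<forall>i. P i \<subseteq> univ S" "linear_order_on (univ S) (defined_rel S \<phi>2 P)"
        using defines_order_params[OF d2 \<open>S \<in> K\<close>] by blast
      moreover have "defined_rel S \<psi> (P(m := {})) = defined_rel S \<phi>2 P"
        using \<open>m \<notin> fvS \<phi>2\<close> by (auto simp: defined_rel_def \<psi>_def sat_upd_notin_fvS)
      ultimately show ?thesis by (intro exI[of _ "P(m := {})"]) auto
    qed
  qed
  then show "MSO_orderable (C \<union> K)" unfolding MSO_orderable_def by blast
qed

lemma linear_order_on_inv_image:
  assumes lin: "linear_order_on U r" and inj: "inj_on f A" and sub: "f ` A \<subseteq> U"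
  shows "linear_order_on A (Restr (inv_image r f) A)"
  unfolding order_on_defs
proof (intro conjI refl_onI antisymI total_onI)
  have r: "refl_on U r" "trans r" "antisym r" "total_on U r"
    using lin by (auto simp: linear_order_on_def dest: partial_order_onD)
  show "Restr (inv_image r f) A \<subseteq> A \<times> A" by blast
  show "trans (Restr (inv_image r f) A)" using r(2) by (intro trans_Restr trans_inv_image)
  fix x y
  show "x \<in> A \<Longrightarrow> (x, x) \<in> Restr (inv_image r f) A"
    using r(1) sub by (auto dest: refl_onD)
  show "(x, y) \<in> Restr (inv_image r f) A \<Longrightarrow> (y, x) \<in> Restr (inv_image r f) A \<Longrightarrow> x = y"
    using r(3) inj by (auto dest: antisymD inj_onD)
  assume "x \<in> A" "y \<in> A" "x \<noteq> y"
  then have "f x \<in> U" "f y \<in> U" "f x \<noteq> f y" using sub inj by (auto dest: inj_onD)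
  then show "(x, y) \<in> Restr (inv_image r f) A \<or> (y, x) \<in> Restr (inv_image r f) A"
    using r(4) \<open>x \<in> A\<close> \<open>y \<in> A\<close> by (auto simp: total_on_def)
qed

lemma Field_linear_order_on: "linear_order_on A r \<Longrightarrow> Field r = A"
  by (auto simp: order_on_defs refl_on_def Field_def)

definition sum_order :: "'a rel \<Rightarrow> 'b rel \<Rightarrow> ('a + 'b) rel" where
  "sum_order r s = map_prod Inl Inl ` r \<union> map_prod Inr Inr ` s \<union> Inl ` Field r \<times> Inr ` Field s"

lemma sum_order_simps [simp]:
  "(Inl a, Inl a') \<in> sum_order r s \<longleftrightarrow> (a, a') \<in> r"
  "(Inr b, Inr b') \<in> sum_order r s \<longleftrightarrow> (b, b') \<in> s"
  "(Inl a, Inr b) \<in> sum_order r s \<longleftrightarrow> a \<in> Field r \<and> b \<in> Field s"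
  "(Inr b, Inl a) \<notin> sum_order r s"
  by (auto simp: sum_order_def)

lemma linear_order_on_sum_order:
  assumes "linear_order_on A r" and "linear_order_on B s"
  shows "linear_order_on (Inl ` A \<union> Inr ` B) (sum_order r s)"
  unfolding order_on_defs
proof (intro conjI refl_onI transI antisymI total_onI)
  have r: "refl_on A r" "trans r" "antisym r" "total_on A r" "Field r = A"
    using assms(1) by (auto simp: linear_order_on_def Field_linear_order_on dest: partial_order_onD)
  have s: "refl_on B s" "trans s" "antisym s" "total_on B s" "Field s = B"
    using assms(2) by (auto simp: linear_order_on_def Field_linear_order_on dest: partial_order_onD)
  show "sum_order r s \<subseteq> (Inl ` A \<union> Inr ` B) \<times> (Inl ` A \<union> Inr ` B)"
    using r(5) s(5) by (auto simp: sum_order_def Field_def)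
  fix x y z
  show "x \<in> Inl ` A \<union> Inr ` B \<Longrightarrow> (x, x) \<in> sum_order r s"
    using r(1) s(1) by (auto dest: refl_onD)
  show "(x, y) \<in> sum_order r s \<Longrightarrow> (y, z) \<in> sum_order r s \<Longrightarrow> (x, z) \<in> sum_order r s"
    using r(2) s(2) by (cases x; cases y; cases z) (auto dest: transD intro: FieldI1 FieldI2)
  show "(x, y) \<in> sum_order r s \<Longrightarrow> (y, x) \<in> sum_order r s \<Longrightarrow> x = y"
    using r(3) s(3) by (cases x; cases y) (auto dest: antisymD)
  show "x \<in> Inl ` A \<union> Inr ` B \<Longrightarrow> y \<in> Inl ` A \<union> Inr ` B \<Longrightarrow> x \<noteq> y \<Longrightarrow>
        (x, y) \<in> sum_order r s \<or> (y, x) \<in> sum_order r s"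
    using r(4) s(4) by (auto simp: total_on_def r(5) s(5)) blast+
qed

section \<open>Relativisation\<close>

primrec bound_setvars :: "'r mso \<Rightarrow> nat set" where
  "bound_setvars (Rel R xs) = {}"
| "bound_setvars (Eq x y) = {}"
| "bound_setvars (Mem x X) = {}"
| "bound_setvars (Neg \<phi>) = bound_setvars \<phi>"
| "bound_setvars (Conj \<phi> \<psi>) = bound_setvars \<phi> \<union> bound_setvars \<psi>"
| "bound_setvars (Disj \<phi> \<psi>) = bound_setvars \<phi> \<union> bound_setvars \<psi>"
| "bound_setvars (Ex1 x \<phi>) = bound_setvars \<phi>"
| "bound_setvars (All1 x \<phi>) = bound_setvars \<phi>"
| "bound_setvars (ExS X \<phi>) = insert X (bound_setvars \<phi>)"
| "bound_setvars (AllS X \<phi>) = insert X (bound_setvars \<phi>)"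

lemma finite_bound_setvars: "finite (bound_setvars \<phi>)"
  by (induction \<phi>) simp_all

text \<open>Set quantifiers need no relativisation: the relativised formula only inspects sets at
  elements of \<open>u\<close>.\<close>

primrec relativize :: "nat \<Rightarrow> ('r \<Rightarrow> nat) \<Rightarrow> 'r mso \<Rightarrow> 'r mso" where
  "relativize u w (Rel R xs) = (if xs = [] then nonempty (w R) else Rel R xs)"
| "relativize u w (Eq x y) = Eq x y"
| "relativize u w (Mem x X) = Mem x X"
| "relativize u w (Neg \<phi>) = Neg (relativize u w \<phi>)"
| "relativize u w (Conj \<phi> \<psi>) = Conj (relativize u w \<phi>) (relativize u w \<psi>)"
| "relativize u w (Disj \<phi> \<psi>) = Disj (relativize u w \<phi>) (relativize u w \<psi>)"
| "relativize u w (Ex1 x \<phi>) = Ex1 x (Conj (Mem x u) (relativize u w \<phi>))"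
| "relativize u w (All1 x \<phi>) = All1 x (Disj (Neg (Mem x u)) (relativize u w \<phi>))"
| "relativize u w (ExS X \<phi>) = ExS X (relativize u w \<phi>)"
| "relativize u w (AllS X \<phi>) = AllS X (relativize u w \<phi>)"

lemma fv1_relativize [simp]: "fv1 (relativize u w \<phi>) = fv1 \<phi>"
  by (induction \<phi>) auto

lemma fvS_relativize: "fvS (relativize u w \<phi>) \<subseteq> insert u (fvS \<phi> \<union> range w)"
  by (induction \<phi>) auto

lemma ex_subset_vimage_iff:
  assumes "inj e" and "e ` A \<subseteq> U"
  shows "(\<exists>P\<subseteq>U. F (e -` P \<inter> A)) \<longleftrightarrow> (\<exists>P'\<subseteq>A. F P')"
proof
  assume "\<exists>P'\<subseteq>A. F P'"
  then obtain P' where "P' \<subseteq> A" "F P'" by blast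
  moreover have "e -` e ` P' \<inter> A = P'" using \<open>P' \<subseteq> A\<close> assms(1) by (auto dest: injD)
  ultimately show "\<exists>P\<subseteq>U. F (e -` P \<inter> A)" using assms(2) by (intro exI[of _ "e ` P'"]) auto
qed auto

lemma all_subset_vimage_iff:
  assumes "inj e" and "e ` A \<subseteq> U"
  shows "(\<forall>P\<subseteq>U. F (e -` P \<inter> A)) \<longleftrightarrow> (\<forall>P'\<subseteq>A. F P')"
  using ex_subset_vimage_iff[OF assms, of "\<lambda>P. \<not> F P"] by blast

lemma sat_relativize:
  assumes inj: "inj e" and sub: "e ` univ A \<subseteq> univ S"
    and rels: "\<And>R ys. ys \<noteq> [] \<Longrightarrow> map e ys \<in> rels S R \<longleftrightarrow> ys \<in> rels A R"
    and "V u = e ` univ A" and "u \<notin> bound_setvars \<phi>"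
    and "\<And>R. univ S \<inter> V (w R) \<noteq> {} \<longleftrightarrow> [] \<in> rels A R" and "\<And>R. w R \<notin> bound_setvars \<phi>"
    and "\<And>X. X \<in> fvS \<phi> \<Longrightarrow> V X \<inter> e ` univ A = e ` V' X"
    and "\<And>x. v' x \<in> univ A"
  shows "sat S (relativize u w \<phi>) (e \<circ> v') V \<longleftrightarrow> sat A \<phi> v' V'"
  using assms(4-)
proof (induction \<phi> arbitrary: v' V V')
  case (Rel R xs)
  then show ?case using rels[of "map v' xs" R] by (simp add: comp_def)
next
  case (Eq x y)
  then show ?case using inj by (simp add: inj_eq)
next
  case (Mem x X)
  then have "e (v' x) \<in> V X \<longleftrightarrow> e (v' x) \<in> e ` V' X" by auto
  then show ?case using inj by (simp add: inj_image_mem_iff)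
next
  case (Neg \<phi>)
  have "sat S (relativize u w \<phi>) (e \<circ> v') V \<longleftrightarrow> sat A \<phi> v' V'"
    using Neg.prems by (intro Neg.IH) auto
  then show ?case by (simp only: relativize.simps sat.simps)
next
  case (Conj \<phi>1 \<phi>2)
  have "sat S (relativize u w \<phi>1) (e \<circ> v') V \<longleftrightarrow> sat A \<phi>1 v' V'"
    "sat S (relativize u w \<phi>2) (e \<circ> v') V \<longleftrightarrow> sat A \<phi>2 v' V'"
    using Conj.prems by (intro Conj.IH; auto)+
  then show ?case by (simp only: relativize.simps sat.simps)
next
  case (Disj \<phi>1 \<phi>2)
  have "sat S (relativize u w \<phi>1) (e \<circ> v') V \<longleftrightarrow> sat A \<phi>1 v' V'"
    "sat S (relativize u w \<phi>2) (e \<circ> v') V \<longleftrightarrow> sat A \<phi>2 v' V'"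
    using Disj.prems by (intro Disj.IH; auto)+
  then show ?case by (simp only: relativize.simps sat.simps)
next
  case (Ex1 x \<phi>)
  have "sat S (relativize u w \<phi>) ((e \<circ> v')(x := e a)) V \<longleftrightarrow> sat A \<phi> (v'(x := a)) V'"
    if "a \<in> univ A" for a
    using Ex1.prems that by (simp only: fun_upd_comp[symmetric]) (intro Ex1.IH; auto)
  then show ?case using sub \<open>V u = e ` univ A\<close> by (auto simp del: comp_apply)
next
  case (All1 x \<phi>)
  have "sat S (relativize u w \<phi>) ((e \<circ> v')(x := e a)) V \<longleftrightarrow> sat A \<phi> (v'(x := a)) V'"
    if "a \<in> univ A" for a
    using All1.prems that by (simp only: fun_upd_comp[symmetric]) (intro All1.IH; auto)
  then show ?case using sub \<open>V u = e ` univ A\<close> by (auto simp del: comp_apply) blast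
next
  case (ExS X \<phi>)
  have "sat S (relativize u w \<phi>) (e \<circ> v') (V(X := P)) \<longleftrightarrow>
        sat A \<phi> v' (V'(X := e -` P \<inter> univ A))" if "P \<subseteq> univ S" for P
    using ExS.prems by (intro ExS.IH) auto
  then have "(\<exists>P\<subseteq>univ S. sat S (relativize u w \<phi>) (e \<circ> v') (V(X := P))) \<longleftrightarrow>
             (\<exists>P\<subseteq>univ S. sat A \<phi> v' (V'(X := e -` P \<inter> univ A)))"
    by (auto simp del: comp_apply)
  also have "\<dots> \<longleftrightarrow> (\<exists>P'\<subseteq>univ A. sat A \<phi> v' (V'(X := P')))"
    by (rule ex_subset_vimage_iff[OF inj sub])
  finally show ?case by (simp only: relativize.simps sat.simps)
next
  case (AllS X \<phi>)
  have "sat S (relativize u w \<phi>) (e \<circ> v') (V(X := P)) \<longleftrightarrow>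
        sat A \<phi> v' (V'(X := e -` P \<inter> univ A))" if "P \<subseteq> univ S" for P
    using AllS.prems by (intro AllS.IH) auto
  then have "(\<forall>P\<subseteq>univ S. sat S (relativize u w \<phi>) (e \<circ> v') (V(X := P))) \<longleftrightarrow>
             (\<forall>P\<subseteq>univ S. sat A \<phi> v' (V'(X := e -` P \<inter> univ A)))"
    by (auto simp del: comp_apply)
  also have "\<dots> \<longleftrightarrow> (\<forall>P'\<subseteq>univ A. sat A \<phi> v' (V'(X := P')))"
    by (rule all_subset_vimage_iff[OF inj sub])
  finally show ?case by (simp only: relativize.simps sat.simps)
qed

definition is_sum ::
  "('a \<Rightarrow> 'c) \<Rightarrow> ('b \<Rightarrow> 'c) \<Rightarrow> ('a, 'r) struc \<Rightarrow> ('b, 'r) struc \<Rightarrow> ('c, 'r) struc \<Rightarrow> bool" where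
  "is_sum e1 e2 A B S \<longleftrightarrow> inj e1 \<and> inj e2 \<and> (\<forall>a b. e1 a \<noteq> e2 b) \<and>
     univ S = e1 ` univ A \<union> e2 ` univ B \<and> (\<forall>R. rels S R = map e1 ` rels A R \<union> map e2 ` rels B R)"

lemma univ_dunion [simp]: "univ (dunion A B) = Inl ` univ A \<union> Inr ` univ B"
  by (simp add: dunion_def)

lemma is_sum_dunion: "is_sum Inl Inr A B (dunion A B)"
  by (auto simp: is_sum_def dunion_def)

lemma is_sum_commute: "is_sum e1 e2 A B S \<Longrightarrow> is_sum e2 e1 B A S"
  by (auto simp: is_sum_def) metis

lemma is_sum_rels:
  assumes "is_sum e1 e2 A B S" and "ys \<noteq> []"
  shows "map e1 ys \<in> rels S R \<longleftrightarrow> ys \<in> rels A R"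
proof -
  have "map e1 ys \<notin> map e2 ` rels B R"
    using assms by (cases ys) (auto simp: is_sum_def)
  moreover have "inj (map e1)" using assms(1) by (simp add: is_sum_def inj_mapI)
  moreover have "rels S R = map e1 ` rels A R \<union> map e2 ` rels B R"
    using assms(1) by (simp add: is_sum_def)
  ultimately show ?thesis by (simp add: inj_image_mem_iff)
qed

lemma is_sum_subset_decompose:
  assumes "is_sum e1 e2 A B S" and "P \<subseteq> univ S"
  shows "e1 ` (e1 -` P \<inter> univ A) \<union> e2 ` (e2 -` P \<inter> univ B) = P"
  using assms by (auto simp: is_sum_def)

lemma ex_subset_sum_iff:
  assumes "is_sum e1 e2 A B S"
  shows "(\<exists>P\<subseteq>univ S. F P) \<longleftrightarrow> (\<exists>P\<subseteq>univ A. \<exists>Q\<subseteq>univ B. F (e1 ` P \<union> e2 ` Q))"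
proof
  assume "\<exists>P\<subseteq>univ S. F P"
  then obtain P where "P \<subseteq> univ S" "F P" by blast
  then show "\<exists>P\<subseteq>univ A. \<exists>Q\<subseteq>univ B. F (e1 ` P \<union> e2 ` Q)"
    using is_sum_subset_decompose[OF assms] by (metis inf_le2)
next
  assume "\<exists>P\<subseteq>univ A. \<exists>Q\<subseteq>univ B. F (e1 ` P \<union> e2 ` Q)"
  then obtain P Q where "P \<subseteq> univ A" "Q \<subseteq> univ B" "F (e1 ` P \<union> e2 ` Q)" by blast
  moreover have "e1 ` P \<union> e2 ` Q \<subseteq> univ S"
    using calculation(1,2) assms by (auto simp: is_sum_def)
  ultimately show "\<exists>P\<subseteq>univ S. F P" by blast
qed

lemma all_subset_sum_iff:
  assumes "is_sum e1 e2 A B S"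
  shows "(\<forall>P\<subseteq>univ S. F P) \<longleftrightarrow> (\<forall>P\<subseteq>univ A. \<forall>Q\<subseteq>univ B. F (e1 ` P \<union> e2 ` Q))"
  using ex_subset_sum_iff[OF assms, of "\<lambda>P. \<not> F P"] by blast

text \<open>A valuation into a sum structure, split into its left part \<open>v\<close>, \<open>V\<close> and its right part:
  \<open>fo x = Some b\<close> assigns \<open>x\<close> to the element \<open>b\<close> of the right summand, and \<open>so X\<close> is the
  right part of the set \<open>X\<close>.\<close>

definition glue_val :: "('a \<Rightarrow> 'c) \<Rightarrow> ('b \<Rightarrow> 'c) \<Rightarrow> (nat \<Rightarrow> 'b option) \<Rightarrow> (nat \<Rightarrow> 'a) \<Rightarrow> nat \<Rightarrow> 'c" where
  "glue_val e1 e2 fo v x = (case fo x of None \<Rightarrow> e1 (v x) | Some b \<Rightarrow> e2 b)"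

definition glue_sets ::
  "('a \<Rightarrow> 'c) \<Rightarrow> ('b \<Rightarrow> 'c) \<Rightarrow> (nat \<Rightarrow> 'b set) \<Rightarrow> (nat \<Rightarrow> 'a set) \<Rightarrow> nat \<Rightarrow> 'c set" where
  "glue_sets e1 e2 so V X = e1 ` V X \<union> e2 ` so X"

lemma glue_val_upd:
  "glue_val e1 e2 (fo(x := None)) (v(x := a)) = (glue_val e1 e2 fo v)(x := e1 a)"
  "glue_val e1 e2 (fo(x := Some b)) v = (glue_val e1 e2 fo v)(x := e2 b)"
  by (auto simp: glue_val_def fun_eq_iff split: option.split)

lemma glue_sets_upd:
  "glue_sets e1 e2 (so(X := Q)) (V(X := P)) = (glue_sets e1 e2 so V)(X := e1 ` P \<union> e2 ` Q)"
  by (auto simp: glue_sets_def fun_eq_iff)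

lemma map_glue_val_in_iff:
  assumes "is_sum e1 e2 A B S"
  shows "map (glue_val e1 e2 fo v) xs \<in> map e1 ` Y \<longleftrightarrow> (\<forall>x\<in>set xs. fo x = None) \<and> map v xs \<in> Y"
    and "map (glue_val e1 e2 fo v) xs \<in> map e2 ` Z \<longleftrightarrow>
         (\<forall>x\<in>set xs. fo x \<noteq> None) \<and> map (the \<circ> fo) xs \<in> Z"
proof -
  have inj: "inj (map e1)" "inj (map e2)" and disj: "\<And>a b. e1 a \<noteq> e2 b"
    using assms by (auto simp: is_sum_def inj_mapI)
  show "map (glue_val e1 e2 fo v) xs \<in> map e1 ` Y \<longleftrightarrow> (\<forall>x\<in>set xs. fo x = None) \<and> map v xs \<in> Y"
  proof (cases "\<forall>x\<in>set xs. fo x = None")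
    case True
    then have eq: "map (glue_val e1 e2 fo v) xs = map e1 (map v xs)" by (simp add: glue_val_def)
    show ?thesis unfolding eq inj_image_mem_iff[OF inj(1)] using True by simp
  next
    case False
    then obtain x b where "x \<in> set xs" "fo x = Some b" by auto
    then have "e2 b \<in> set (map (glue_val e1 e2 fo v) xs)" by (force simp: glue_val_def)
    moreover have "e2 b \<notin> set (map e1 ys)" for ys by (metis disj imageE set_map)
    ultimately have "map (glue_val e1 e2 fo v) xs \<notin> map e1 ` Y" by (metis imageE)
    with False show ?thesis by simp
  qed
  show "map (glue_val e1 e2 fo v) xs \<in> map e2 ` Z \<longleftrightarrow>
        (\<forall>x\<in>set xs. fo x \<noteq> None) \<and> map (the \<circ> fo) xs \<in> Z"
  proof (cases "\<forall>x\<in>set xs. fo x \<noteq> None")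
    case True
    then have eq: "map (glue_val e1 e2 fo v) xs = map e2 (map (the \<circ> fo) xs)"
      by (auto simp: glue_val_def)
    show ?thesis unfolding eq inj_image_mem_iff[OF inj(2)] using True by simp
  next
    case False
    then obtain x where "x \<in> set xs" "fo x = None" by auto
    then have "e1 (v x) \<in> set (map (glue_val e1 e2 fo v) xs)" by (force simp: glue_val_def)
    moreover have "e1 (v x) \<notin> set (map e2 zs)" for zs by (metis disj imageE set_map)
    ultimately have "map (glue_val e1 e2 fo v) xs \<notin> map e2 ` Z" by (metis imageE)
    with False show ?thesis by simp
  qed
qed

section \<open>Eliminating a finite summand\<close>

primrec elim_summand ::
  "('b, 'r) struc \<Rightarrow> 'b list \<Rightarrow> (nat \<Rightarrow> 'b option) \<Rightarrow> (nat \<Rightarrow> 'b set) \<Rightarrow> 'r mso \<Rightarrow> 'r mso" where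
  "elim_summand B bs fo so (Rel R xs) =
     Disj (if \<forall>x\<in>set xs. fo x = None then Rel R xs else mso_const False)
       (mso_const ((\<forall>x\<in>set xs. fo x \<noteq> None) \<and> map (the \<circ> fo) xs \<in> rels B R))"
| "elim_summand B bs fo so (Eq x y) =
     (case (fo x, fo y) of
        (None, None) \<Rightarrow> Eq x y
      | (Some a, Some b) \<Rightarrow> mso_const (a = b)
      | _ \<Rightarrow> mso_const False)"
| "elim_summand B bs fo so (Mem x X) =
     (case fo x of None \<Rightarrow> Mem x X | Some b \<Rightarrow> mso_const (b \<in> so X))"
| "elim_summand B bs fo so (Neg \<phi>) = Neg (elim_summand B bs fo so \<phi>)"
| "elim_summand B bs fo so (Conj \<phi> \<psi>) = Conj (elim_summand B bs fo so \<phi>) (elim_summand B bs fo so \<psi>)"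
| "elim_summand B bs fo so (Disj \<phi> \<psi>) = Disj (elim_summand B bs fo so \<phi>) (elim_summand B bs fo so \<psi>)"
| "elim_summand B bs fo so (Ex1 x \<phi>) =
     Disj (Ex1 x (elim_summand B bs (fo(x := None)) so \<phi>))
       (disjs (map (\<lambda>b. elim_summand B bs (fo(x := Some b)) so \<phi>) bs))"
| "elim_summand B bs fo so (All1 x \<phi>) =
     Conj (All1 x (elim_summand B bs (fo(x := None)) so \<phi>))
       (conjs (map (\<lambda>b. elim_summand B bs (fo(x := Some b)) so \<phi>) bs))"
| "elim_summand B bs fo so (ExS X \<phi>) =
     disjs (map (\<lambda>Q. ExS X (elim_summand B bs fo (so(X := set Q)) \<phi>)) (subseqs bs))"
| "elim_summand B bs fo so (AllS X \<phi>) =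
     conjs (map (\<lambda>Q. AllS X (elim_summand B bs fo (so(X := set Q)) \<phi>)) (subseqs bs))"

lemma fv1_elim_summand: "x \<in> fv1 (elim_summand B bs fo so \<phi>) \<Longrightarrow> x \<in> fv1 \<phi> \<and> fo x = None"
  by (induction \<phi> arbitrary: fo so) (fastforce split: option.splits if_splits)+

lemma fvS_elim_summand: "X \<in> fvS (elim_summand B bs fo so \<phi>) \<Longrightarrow> X \<in> fvS \<phi>"
  by (induction \<phi> arbitrary: fo so) (auto split: option.splits if_splits)

lemma sat_elim_summand:
  assumes sum: "is_sum e1 e2 A B S" and bs: "set bs = univ B"
  shows "sat A (elim_summand B bs fo so \<phi>) v V \<longleftrightarrow>
         sat S \<phi> (glue_val e1 e2 fo v) (glue_sets e1 e2 so V)"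
proof (induction \<phi> arbitrary: fo so v V)
  case (Rel R xs)
  have "rels S R = map e1 ` rels A R \<union> map e2 ` rels B R" using sum by (simp add: is_sum_def)
  then show ?case by (auto simp: map_glue_val_in_iff[OF sum])
next
  case (Eq x y)
  have "inj e1" "inj e2" "\<And>a b. e1 a \<noteq> e2 b" "\<And>a b. e2 b \<noteq> e1 a"
    using sum by (auto simp: is_sum_def) metis
  then show ?case by (auto simp: glue_val_def inj_eq split: option.splits)
next
  case (Mem x X)
  have "inj e1" "inj e2" "\<And>a b. e1 a \<noteq> e2 b" "\<And>a b. e2 b \<noteq> e1 a"
    using sum by (auto simp: is_sum_def) metis
  then show ?case by (auto simp: glue_val_def glue_sets_def inj_image_mem_iff split: option.splits)
next
  case (Ex1 x \<phi>)
  have "univ S = e1 ` univ A \<union> e2 ` univ B" using sum by (simp add: is_sum_def)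
  then have "sat S (Ex1 x \<phi>) (glue_val e1 e2 fo v) (glue_sets e1 e2 so V) \<longleftrightarrow>
      (\<exists>a\<in>univ A. sat S \<phi> ((glue_val e1 e2 fo v)(x := e1 a)) (glue_sets e1 e2 so V)) \<or>
      (\<exists>b\<in>univ B. sat S \<phi> ((glue_val e1 e2 fo v)(x := e2 b)) (glue_sets e1 e2 so V))"
    by auto
  then show ?case by (simp add: Ex1.IH glue_val_upd[symmetric] bs del: fun_upd_apply)
next
  case (All1 x \<phi>)
  have "univ S = e1 ` univ A \<union> e2 ` univ B" using sum by (simp add: is_sum_def)
  then have "sat S (All1 x \<phi>) (glue_val e1 e2 fo v) (glue_sets e1 e2 so V) \<longleftrightarrow>
      (\<forall>a\<in>univ A. sat S \<phi> ((glue_val e1 e2 fo v)(x := e1 a)) (glue_sets e1 e2 so V)) \<and>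
      (\<forall>b\<in>univ B. sat S \<phi> ((glue_val e1 e2 fo v)(x := e2 b)) (glue_sets e1 e2 so V))"
    by auto
  then show ?case by (simp add: All1.IH glue_val_upd[symmetric] bs del: fun_upd_apply)
next
  case (ExS X \<phi>)
  have "sat S (ExS X \<phi>) (glue_val e1 e2 fo v) (glue_sets e1 e2 so V) \<longleftrightarrow>
      (\<exists>P\<subseteq>univ A. \<exists>Q\<subseteq>univ B.
         sat S \<phi> (glue_val e1 e2 fo v) ((glue_sets e1 e2 so V)(X := e1 ` P \<union> e2 ` Q)))"
    by (simp only: sat.simps ex_subset_sum_iff[OF sum])
  also have "\<dots> \<longleftrightarrow> (\<exists>Q\<in>set ` set (subseqs bs). \<exists>P\<subseteq>univ A.
      sat A (elim_summand B bs fo (so(X := Q)) \<phi>) v (V(X := P)))"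
    by (auto simp: ExS.IH glue_sets_upd[symmetric] subseqs_powset bs simp del: fun_upd_apply)
  finally show ?case by auto
next
  case (AllS X \<phi>)
  have "sat S (AllS X \<phi>) (glue_val e1 e2 fo v) (glue_sets e1 e2 so V) \<longleftrightarrow>
      (\<forall>P\<subseteq>univ A. \<forall>Q\<subseteq>univ B.
         sat S \<phi> (glue_val e1 e2 fo v) ((glue_sets e1 e2 so V)(X := e1 ` P \<union> e2 ` Q)))"
    by (simp only: sat.simps all_subset_sum_iff[OF sum])
  also have "\<dots> \<longleftrightarrow> (\<forall>Q\<in>set ` set (subseqs bs). \<forall>P\<subseteq>univ A.
      sat A (elim_summand B bs fo (so(X := Q)) \<phi>) v (V(X := P)))"
    by (auto simp: AllS.IH glue_sets_upd[symmetric] subseqs_powset bs simp del: fun_upd_apply)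
  finally show ?case by auto
qed simp_all

lemma sat_elim_summand_restrict:
  assumes "is_sum e1 e2 A B S" and "set bs = univ B"
    and "\<And>X. X \<in> fvS \<psi> \<Longrightarrow>
           P X \<subseteq> univ S \<and> Q X = e2 -` P X \<inter> univ B \<and> PA X = e1 -` P X \<inter> univ A"
  shows "sat A (elim_summand B bs (\<lambda>_. None) Q \<psi>) v PA \<longleftrightarrow> sat S \<psi> (e1 \<circ> v) P"
proof -
  have "sat A (elim_summand B bs (\<lambda>_. None) Q \<psi>) v PA \<longleftrightarrow>
        sat S \<psi> (glue_val e1 e2 (\<lambda>_. None) v) (glue_sets e1 e2 Q PA)"
    by (rule sat_elim_summand[OF assms(1,2)])
  also have "\<dots> \<longleftrightarrow> sat S \<psi> (e1 \<circ> v) P"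
  proof (rule sat_cong_fv)
    fix X assume "X \<in> fvS \<psi>"
    then show "glue_sets e1 e2 Q PA X = P X"
      using assms(3) is_sum_subset_decompose[OF assms(1)] by (simp add: glue_sets_def)
  qed (simp add: glue_val_def)
  finally show ?thesis .
qed

section \<open>Disjoint sums of classes\<close>

lemma sat_relativize_pair:
  assumes "is_sum e1 e2 A B S" and "a \<in> univ A" and "b \<in> univ A"
    and "P u = e1 ` univ A" and "u \<notin> bound_setvars \<phi>"
    and "\<And>R. univ S \<inter> P (w R) \<noteq> {} \<longleftrightarrow> [] \<in> rels A R" and "\<And>R. w R \<notin> bound_setvars \<phi>"
    and "\<And>X. X \<in> fvS \<phi> \<Longrightarrow> P X \<inter> e1 ` univ A = e1 ` P1 X"
  shows "sat S (relativize u w \<phi>) (\<lambda>i. if i = 0 then e1 a else e1 b) P \<longleftrightarrow>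
         (a, b) \<in> defined_rel A \<phi> P1"
proof -
  have eq: "(\<lambda>i. if i = 0 then e1 a else e1 b) = e1 \<circ> (\<lambda>i. if i = 0 then a else b)" by auto
  have "sat S (relativize u w \<phi>) (e1 \<circ> (\<lambda>i. if i = 0 then a else b)) P \<longleftrightarrow>
        sat A \<phi> (\<lambda>i. if i = 0 then a else b) P1"
    by (intro sat_relativize assms(4-) is_sum_rels[OF assms(1)]) (use assms(1-3) in \<open>auto simp: is_sum_def\<close>)
  then show ?thesis unfolding eq mem_defined_rel using assms(2,3) by blast
qed

definition sum_formula :: "nat \<Rightarrow> nat \<Rightarrow> ('r \<Rightarrow> nat) \<Rightarrow> ('r \<Rightarrow> nat) \<Rightarrow> 'r mso \<Rightarrow> 'r mso \<Rightarrow> 'r mso" where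
  "sum_formula uA uB wA wB \<phi>1 \<phi>2 =
    Disj (Conj (Mem 0 uA) (Conj (Mem 1 uA) (relativize uA wA \<phi>1)))
      (Disj (Conj (Mem 0 uA) (Mem 1 uB)) (Conj (Mem 0 uB) (Conj (Mem 1 uB) (relativize uB wB \<phi>2))))"

lemma defined_rel_sum_formula:
  assumes "linear_order_on (univ A) (defined_rel A \<phi>1 P1)"
    and "linear_order_on (univ B) (defined_rel B \<phi>2 P2)"
    and "P uA = Inl ` univ A" and "P uB = Inr ` univ B"
    and "uA \<notin> bound_setvars \<phi>1" and "uB \<notin> bound_setvars \<phi>2"
    and "\<And>R. wA R \<notin> bound_setvars \<phi>1" and "\<And>R. wB R \<notin> bound_setvars \<phi>2"
    and "\<And>R. univ (dunion A B) \<inter> P (wA R) \<noteq> {} \<longleftrightarrow> [] \<in> rels A R"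
    and "\<And>R. univ (dunion A B) \<inter> P (wB R) \<noteq> {} \<longleftrightarrow> [] \<in> rels B R"
    and "\<And>X. X \<in> fvS \<phi>1 \<Longrightarrow> P X \<inter> Inl ` univ A = Inl ` P1 X"
    and "\<And>X. X \<in> fvS \<phi>2 \<Longrightarrow> P X \<inter> Inr ` univ B = Inr ` P2 X"
  shows "defined_rel (dunion A B) (sum_formula uA uB wA wB \<phi>1 \<phi>2) P =
         sum_order (defined_rel A \<phi>1 P1) (defined_rel B \<phi>2 P2)"
    (is "defined_rel ?S ?\<psi> P = sum_order ?r1 ?r2")
proof -
  have Field: "Field ?r1 = univ A" "Field ?r2 = univ B"
    using assms(1,2) by (simp_all add: Field_linear_order_on)
  have left: "sat ?S (relativize uA wA \<phi>1) (\<lambda>i. if i = 0 then Inl a else Inl b) P \<longleftrightarrow> (a, b) \<in> ?r1"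
    if "a \<in> univ A" "b \<in> univ A" for a b
    using is_sum_dunion that by (rule sat_relativize_pair) (use assms in auto)
  have right: "sat ?S (relativize uB wB \<phi>2) (\<lambda>i. if i = 0 then Inr a else Inr b) P \<longleftrightarrow> (a, b) \<in> ?r2"
    if "a \<in> univ B" "b \<in> univ B" for a b
    using is_sum_commute[OF is_sum_dunion] that by (rule sat_relativize_pair) (use assms in auto)
  have "(x, y) \<in> defined_rel ?S ?\<psi> P \<longleftrightarrow> (x, y) \<in> sum_order ?r1 ?r2"
    if "x \<in> univ ?S" "y \<in> univ ?S" for x y
    using that by (cases x; cases y)
      (auto simp: mem_defined_rel sum_formula_def assms(3,4) Field left right)
  moreover have "sum_order ?r1 ?r2 \<subseteq> univ ?S \<times> univ ?S"
    using linear_order_on_sum_order[OF assms(1,2)] by (simp add: linear_order_on_def partial_order_onD)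
  ultimately show ?thesis by (auto simp: defined_rel_def)
qed

text \<open>Nullary relations of the summands are invisible in the sum, so their truth values are
  passed as the parameters \<open>wA R\<close> and \<open>wB R\<close>.\<close>

lemma linear_order_on_sum_formula:
  assumes "linear_order_on (univ A) (defined_rel A \<phi>1 P1)" and "\<forall>i. P1 i \<subseteq> univ A"
    and "linear_order_on (univ B) (defined_rel B \<phi>2 P2)" and "\<forall>i. P2 i \<subseteq> univ B"
    and "univ (dunion A B) \<noteq> {}"
    and "fvS \<phi>1 \<union> bound_setvars \<phi>1 \<subseteq> {..<m}" and "fvS \<phi>2 \<union> bound_setvars \<phi>2 \<subseteq> {..<m}"
    and "inj wA" and "inj wB" and "\<And>R R'. wA R \<noteq> wB R'"
    and "\<And>R. Suc m < wA R" and "\<And>R. Suc m < wB R"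
  shows "\<exists>P. (\<forall>i. P i \<subseteq> univ (dunion A B)) \<and>
           linear_order_on (univ (dunion A B)) (defined_rel (dunion A B) (sum_formula m (Suc m) wA wB \<phi>1 \<phi>2) P)"
proof -
  let ?S = "dunion A B"
  define P where "P X =
    (if X < m then Inl ` P1 X \<union> Inr ` P2 X
     else if X = m then Inl ` univ A
     else if X = Suc m then Inr ` univ B
     else if \<exists>R. X = wA R \<and> [] \<in> rels A R \<or> X = wB R \<and> [] \<in> rels B R then univ ?S
     else {})" for X
  have "\<forall>i. P i \<subseteq> univ ?S" using assms(2,4) by (auto simp: P_def subset_iff)
  have "\<not> wA R < m" "wA R \<noteq> m" "wA R \<noteq> Suc m" "\<not> wB R < m" "wB R \<noteq> m" "wB R \<noteq> Suc m" for R
    using assms(11,12)[of R] by auto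
  moreover have "(\<exists>R'. wA R = wA R' \<and> [] \<in> rels A R' \<or> wA R = wB R' \<and> [] \<in> rels B R') \<longleftrightarrow> [] \<in> rels A R"
    "(\<exists>R'. wB R = wA R' \<and> [] \<in> rels A R' \<or> wB R = wB R' \<and> [] \<in> rels B R') \<longleftrightarrow> [] \<in> rels B R" for R
    using assms(8-10) by (auto simp: inj_eq) (metis assms(10))
  ultimately have "P (wA R) = (if [] \<in> rels A R then univ ?S else {})"
    "P (wB R) = (if [] \<in> rels B R then univ ?S else {})" for R
    unfolding P_def by presburger+
  then have "univ ?S \<inter> P (wA R) \<noteq> {} \<longleftrightarrow> [] \<in> rels A R"
    "univ ?S \<inter> P (wB R) \<noteq> {} \<longleftrightarrow> [] \<in> rels B R" for R
    using assms(5) by simp_all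
  moreover have "m \<notin> bound_setvars \<phi>1" "Suc m \<notin> bound_setvars \<phi>2"
    "wA R \<notin> bound_setvars \<phi>1" "wB R \<notin> bound_setvars \<phi>2" for R
    using assms(6,7) assms(11,12)[of R] by auto
  moreover have "P X \<inter> Inl ` univ A = Inl ` P1 X" if "X \<in> fvS \<phi>1" for X
    using that assms(2,6) by (auto simp: P_def)
  moreover have "P X \<inter> Inr ` univ B = Inr ` P2 X" if "X \<in> fvS \<phi>2" for X
    using that assms(4,7) by (auto simp: P_def)
  ultimately have "defined_rel ?S (sum_formula m (Suc m) wA wB \<phi>1 \<phi>2) P =
                   sum_order (defined_rel A \<phi>1 P1) (defined_rel B \<phi>2 P2)"
    by (intro defined_rel_sum_formula assms(1,3)) (simp_all add: P_def)
  then show ?thesis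
    using \<open>\<forall>i. P i \<subseteq> univ ?S\<close> linear_order_on_sum_order[OF assms(1,3)] by (intro exI[of _ P]) simp
qed

lemma MSO_orderable_dunion_class:
  fixes C :: "('a, 'r::finite) struc set" and K :: "('b, 'r) struc set"
  assumes "MSO_orderable C" and "MSO_orderable K"
  shows "MSO_orderable (dunion_class C K)"
proof -
  obtain \<phi>1 n1 \<phi>2 n2 where d1: "defines_order \<phi>1 n1 C" and d2: "defines_order \<phi>2 n2 K"
    using assms unfolding MSO_orderable_def by blast
  note fv1 = defines_order_fv[OF d1] and fv2 = defines_order_fv[OF d2]
  obtain h :: "'r \<Rightarrow> nat" and k where "h ` UNIV = {..<k}" and "inj h"
    using finite_imp_inj_to_nat_seg[OF finite_UNIV] by (auto simp: lessThan_def)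
  then have hk: "h R < k" for R by auto
  define m where "m = Suc (Max (bound_setvars \<phi>1 \<union> bound_setvars \<phi>2 \<union> {n1, n2}))"
  have "x < m" if "x \<in> bound_setvars \<phi>1 \<union> bound_setvars \<phi>2 \<union> {n1, n2}" for x
    unfolding m_def using that by (intro le_imp_less_Suc Max_ge) (simp_all add: finite_bound_setvars)
  then have "n1 < m" "n2 < m" "bound_setvars \<phi>1 \<subseteq> {..<m}" "bound_setvars \<phi>2 \<subseteq> {..<m}"
    by auto
  with fv1(2) fv2(2) have m: "fvS \<phi>1 \<union> bound_setvars \<phi>1 \<subseteq> {..<m}" "fvS \<phi>2 \<union> bound_setvars \<phi>2 \<subseteq> {..<m}"
    by auto
  define wA wB where "wA R = m + 2 + 2 * h R" and "wB R = m + 3 + 2 * h R" for R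
  define \<psi> where "\<psi> = sum_formula m (Suc m) wA wB \<phi>1 \<phi>2"
  have "defines_order \<psi> (m + 2 + 2 * k) (dunion_class C K)"
  proof (rule defines_orderI)
    show "fv1 \<psi> \<subseteq> {0, 1}"
      using fv1(1) fv2(1) by (simp add: \<psi>_def sum_formula_def)
    have "fvS \<psi> \<subseteq> {m, Suc m} \<union> fvS \<phi>1 \<union> fvS \<phi>2 \<union> range wA \<union> range wB"
      using fvS_relativize[of m wA \<phi>1] fvS_relativize[of "Suc m" wB \<phi>2]
      by (auto simp: \<psi>_def sum_formula_def)
    moreover have "wA R < m + 2 + 2 * k" "wB R < m + 2 + 2 * k" for R
      using hk[of R] by (simp_all add: wA_def wB_def)
    then have "{m, Suc m} \<union> fvS \<phi>1 \<union> fvS \<phi>2 \<union> range wA \<union> range wB \<subseteq> {..<m + 2 + 2 * k}"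
      using m by fastforce
    ultimately show "fvS \<psi> \<subseteq> {..<m + 2 + 2 * k}" by (rule subset_trans)
  next
    fix S assume "S \<in> dunion_class C K" and "univ S \<noteq> {}"
    then obtain A B where "A \<in> C" "B \<in> K" and S: "S = dunion A B"
      unfolding dunion_class_def by blast
    have "inj wA" "inj wB" "wA R \<noteq> wB R'" "Suc m < wA R" "Suc m < wB R" for R R'
      using \<open>inj h\<close> by (auto simp: wA_def wB_def inj_def) presburger
    then show "\<exists>P. (\<forall>i. P i \<subseteq> univ S) \<and> linear_order_on (univ S) (defined_rel S \<psi> P)"
      using defines_order_params[OF d1 \<open>A \<in> C\<close>] defines_order_params[OF d2 \<open>B \<in> K\<close>]
        \<open>univ S \<noteq> {}\<close> m unfolding S \<psi>_def by (blast intro: linear_order_on_sum_formula)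
  qed
  then show ?thesis unfolding MSO_orderable_def by blast
qed

text \<open>The parameter \<open>n + j\<close> is non-empty exactly when \<open>qs ! j\<close> is the right guess for the
  parts of the parameters in the right summand.\<close>

lemma MSO_orderable_summand:
  assumes d: "defines_order \<psi> n D" and "finite (univ B)"
    and sum: "\<And>A. A \<in> C \<Longrightarrow> \<exists>S\<in>D. is_sum e1 e2 A B S"
  shows "MSO_orderable C"
proof -
  note fv = defines_order_fv[OF d]
  obtain bs where bs: "set bs = univ B" using finite_list[OF \<open>finite (univ B)\<close>] by blast
  obtain qs where qs: "set qs = {..<n} \<rightarrow>\<^sub>E Pow (univ B)"
    using finite_list[OF finite_PiE] \<open>finite (univ B)\<close> by (metis finite_Pow_iff finite_lessThan)
  define \<Phi> where "\<Phi> = disjs (map (\<lambda>j. Conj (nonempty (n + j)) (elim_summand B bs (\<lambda>_. None) (qs ! j) \<psi>))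
                                  [0..<length qs])"
  have "defines_order \<Phi> (n + length qs) C"
  proof (rule defines_orderI)
    show "fv1 \<Phi> \<subseteq> {0, 1}" using fv(1) by (auto simp: \<Phi>_def dest!: fv1_elim_summand)
    show "fvS \<Phi> \<subseteq> {..<n + length qs}" using fv(2) by (auto simp: \<Phi>_def dest!: fvS_elim_summand)
  next
    fix A assume "A \<in> C" and "univ A \<noteq> {}"
    then obtain S where "S \<in> D" and S: "is_sum e1 e2 A B S" using sum by blast
    then obtain P where P: "\<forall>i. P i \<subseteq> univ S" "linear_order_on (univ S) (defined_rel S \<psi> P)"
      using defines_order_params[OF d] by blast
    define q where "q = restrict (\<lambda>X. e2 -` P X \<inter> univ B) {..<n}"
    have "q \<in> set qs" unfolding qs q_def by auto
    then obtain j where j: "j < length qs" "qs ! j = q" by (auto simp: in_set_conv_nth)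
    define PA where "PA X = (if X < n then e1 -` P X \<inter> univ A else if X = n + j then univ A else {})"
      for X
    have "sat A \<Phi> (\<lambda>i. if i = 0 then a else b) PA \<longleftrightarrow>
          sat S \<psi> (\<lambda>i. if i = 0 then e1 a else e1 b) P" for a b
    proof -
      have "univ A \<inter> PA (n + j') \<noteq> {} \<longleftrightarrow> j' = j" for j'
        using \<open>univ A \<noteq> {}\<close> by (auto simp: PA_def)
      then have "sat A \<Phi> (\<lambda>i. if i = 0 then a else b) PA \<longleftrightarrow>
                 sat A (elim_summand B bs (\<lambda>_. None) q \<psi>) (\<lambda>i. if i = 0 then a else b) PA"
        using j by (auto simp: \<Phi>_def)
      also have "\<dots> \<longleftrightarrow> sat S \<psi> (e1 \<circ> (\<lambda>i. if i = 0 then a else b)) P"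
        using fv(2) P(1) by (intro sat_elim_summand_restrict[OF S bs]) (auto simp: q_def PA_def)
      also have "e1 \<circ> (\<lambda>i. if i = 0 then a else b) = (\<lambda>i. if i = 0 then e1 a else e1 b)"
        by auto
      finally show ?thesis .
    qed
    moreover have "e1 ` univ A \<subseteq> univ S" "inj e1" using S by (auto simp: is_sum_def)
    ultimately have "defined_rel A \<Phi> PA = Restr (inv_image (defined_rel S \<psi> P) e1) (univ A)"
      by (auto simp: mem_defined_rel image_subset_iff)
    moreover have "linear_order_on (univ A) (Restr (inv_image (defined_rel S \<psi> P) e1) (univ A))"
      using P(2) \<open>e1 ` univ A \<subseteq> univ S\<close>
      by (intro linear_order_on_inv_image inj_on_subset[OF \<open>inj e1\<close>]) auto
    moreover have "\<forall>i. PA i \<subseteq> univ A" by (simp add: PA_def)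
    ultimately show "\<exists>P. (\<forall>i. P i \<subseteq> univ A) \<and> linear_order_on (univ A) (defined_rel A \<Phi> P)"
      by (intro exI[of _ PA]) simp
  qed
  then show ?thesis unfolding MSO_orderable_def by blast
qed

lemma MSO_orderable_dunion_class_iff:
  fixes C :: "('a, 'r::finite) struc set" and K :: "('b, 'r) struc set"
  assumes "C \<noteq> {}" and "K \<noteq> {}"
    and "\<forall>A \<in> C. finite (univ A)" and "\<forall>B \<in> K. finite (univ B)"
  shows "MSO_orderable (dunion_class C K) \<longleftrightarrow> MSO_orderable C \<and> MSO_orderable K"
proof
  assume "MSO_orderable (dunion_class C K)"
  then obtain \<psi> n where d: "defines_order \<psi> n (dunion_class C K)"
    unfolding MSO_orderable_def by blast
  obtain A0 B0 where "A0 \<in> C" "B0 \<in> K" using assms(1,2) by blast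
  have "MSO_orderable C"
  proof (rule MSO_orderable_summand[OF d])
    show "finite (univ B0)" using \<open>B0 \<in> K\<close> assms(4) by blast
    show "\<exists>S\<in>dunion_class C K. is_sum Inl Inr A B0 S" if "A \<in> C" for A
      using that \<open>B0 \<in> K\<close> is_sum_dunion by (auto simp: dunion_class_def)
  qed
  moreover have "MSO_orderable K"
  proof (rule MSO_orderable_summand[OF d])
    show "finite (univ A0)" using \<open>A0 \<in> C\<close> assms(3) by blast
    show "\<exists>S\<in>dunion_class C K. is_sum Inr Inl B A0 S" if "B \<in> K" for B
      using that \<open>A0 \<in> C\<close> is_sum_commute[OF is_sum_dunion] by (auto simp: dunion_class_def)
  qed
  ultimately show "MSO_orderable C \<and> MSO_orderable K" ..
next
  assume "MSO_orderable C \<and> MSO_orderable K"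
  then show "MSO_orderable (dunion_class C K)" by (blast intro: MSO_orderable_dunion_class)
qed

theorem proposition3p5:
  fixes ar :: "'r::finite \<Rightarrow> nat"
    and C K :: "('a, 'r) struc set"
  assumes "C \<noteq> {}" and "K \<noteq> {}"
    and "\<forall>S \<in> C. is_struct ar S" and "\<forall>S \<in> K. is_struct ar S"
  shows "(MSO_orderable (C \<union> K) \<longleftrightarrow> MSO_orderable C \<and> MSO_orderable K)
       \<and> (MSO_orderable (dunion_class C K) \<longleftrightarrow> MSO_orderable C \<and> MSO_orderable K)"
proof -
  have "\<forall>S \<in> C. finite (univ S)" and "\<forall>S \<in> K. finite (univ S)"
    using assms(3,4) by (simp_all add: is_struct_def)
  with assms(1,2) show ?thesis
    by (simp add: MSO_orderable_Un_iff MSO_orderable_dunion_class_iff)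
qed

end
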